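(* Let $(k,s)\in\mathcal A$. Then there exist $\theta>0$ and constants independent of $\delta^u,\delta^v\in(0,\delta_0]$ such that: (a) for every $\epsilon<\min\{3-k+s,\ s+5/2\}$, $$\|\mathcal B^u[u_1,v_2]\|_{L^\infty_tH^{k+\epsilon}_x}\lesssim(\delta^u)^{\theta}\|u_1\|_{L^\infty_tH^k_x}\|v_2\|_{L^\infty_tH^s_x};$$ (b) for every $\epsilon<\min\{2-s+k,\ 4k-s\}$, $$\|\mathcal B^v[u_1,u_2]\|_{L^\infty_tH^{s+\epsilon}_x}\lesssim(\delta^v)^{\theta}\|u_1\|_{L^\infty_tH^k_x}\|u_2\|_{L^\infty_tH^k_x}.$$ (Here $\theta$ and the implicit constants may depend on $k,s,\epsilon$.)
   Context: $\mathcal{A}=\{(k,s)\in\mathbb R^2: k\ge 0,\ s>-3/4,\ s<4k,\ -2<k-s<3\}$. $\mathcal F_xf(\xi)=\int e^{-ix\xi}f(x)dx$. $\delta_0>0$ is a fixed small absolute constant and $\delta^u,\delta^v\in(0,\delta_0]$. $U_\xi=\{\xi_1:100|\xi_1|<|\xi|,\ |\xi|>1/\delta^u\}$, $V_\xi=\{\xi_1:1/\delta^v<|\xi_1|<100|\xi|\}$; $\Phi_1^u(\xi,\xi_1,\xi_2)=\xi^2-\xi_1^2+\xi_2^3$, $\Phi_1^v(\xi,\xi_1,\xi_2)=-\xi^3-\xi_1^2+\xi_2^2$. The boundary operators, acting pointwise in time, are $\mathcal F_x(\mathcal B^u[f,g])(\xi)=\frac1{2\pi}\int_{\xi_1\in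 U_\xi}\frac{\mathcal F_xf(\xi_1)\mathcal F_xg(\xi-\xi_1)}{i\Phi_1^u(\xi,\xi_1,\xi-\xi_1)}d\xi_1$, $\mathcal F_x(\mathcal B^v[f,g])(\xi)=\frac{i\xi}{2\pi}\int_{\xi_1\in V_\xi}\frac{\mathcal F_xf(\xi_1)\overline{\mathcal F_xg(\xi_1-\xi)}}{i\Phi_1^v(\xi,\xi_1,\xi-\xi_1)}d\xi_1$. *)

theory Defs
  imports "HOL-Analysis.Analysis"
begin

text \<open>All functions of x are represented through their spatial Fourier transforms
  (F_x f)(xi) = int e^{-i x xi} f(x) dx; by Plancherel this is a bijection between H^s
  and the weighted L^2 space below.  A time-dependent function is a map
  t \<mapsto> (xi \<mapsto> F_x u(t)(xi)).\<close>

definition admissible :: "(real \<times> real) set" where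
  "admissible = {(k, s). k \<ge> 0 \<and> s > -3/4 \<and> s < 4 * k \<and> -2 < k - s \<and> k - s < 3}"

definition sob_sq :: "real \<Rightarrow> (real \<Rightarrow> complex) \<Rightarrow> ennreal" where
  "sob_sq s F = (\<integral>\<^sup>+ \<xi>. ennreal ((1 + \<xi>\<^sup>2) powr s * (cmod (F \<xi>))\<^sup>2) \<partial>lborel)"

definition U_set :: "real \<Rightarrow> real \<Rightarrow> real set" where
  "U_set \<delta> \<xi> = {\<xi>1. 100 * \<bar>\<xi>1\<bar> < \<bar>\<xi>\<bar> \<and> \<bar>\<xi>\<bar> > 1 / \<delta>}"

definition V_set :: "real \<Rightarrow> real \<Rightarrow> real set" where
  "V_set \<delta> \<xi> = {\<xi>1. 1 / \<delta> < \<bar>\<xi>1\<bar> \<and> \<bar>\<xi>1\<bar> < 100 * \<bar>\<xi>\<bar>}"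

definition Phi_u :: "real \<Rightarrow> real \<Rightarrow> real \<Rightarrow> real" where
  "Phi_u \<xi> \<xi>1 \<xi>2 = \<xi>\<^sup>2 - \<xi>1\<^sup>2 + \<xi>2 ^ 3"

definition Phi_v :: "real \<Rightarrow> real \<Rightarrow> real \<Rightarrow> real" where
  "Phi_v \<xi> \<xi>1 \<xi>2 = - (\<xi> ^ 3) - \<xi>1\<^sup>2 + \<xi>2\<^sup>2"

definition Bu_hat :: "real \<Rightarrow> (real \<Rightarrow> complex) \<Rightarrow> (real \<Rightarrow> complex) \<Rightarrow> real \<Rightarrow> complex" where
  "Bu_hat \<delta> Ff Fg \<xi> = (1 / (2 * complex_of_real pi)) *
     (LINT \<xi>1 : U_set \<delta> \<xi> | lborel.
        Ff \<xi>1 * Fg (\<xi> - \<xi>1) / (\<i> * complex_of_real (Phi_u \<xi> \<xi>1 (\<xi> - \<xi>1))))"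

definition Bv_hat :: "real \<Rightarrow> (real \<Rightarrow> complex) \<Rightarrow> (real \<Rightarrow> complex) \<Rightarrow> real \<Rightarrow> complex" where
  "Bv_hat \<delta> Ff Fg \<xi> = (\<i> * complex_of_real \<xi> / (2 * complex_of_real pi)) *
     (LINT \<xi>1 : V_set \<delta> \<xi> | lborel.
        Ff \<xi>1 * cnj (Fg (\<xi>1 - \<xi>)) / (\<i> * complex_of_real (Phi_v \<xi> \<xi>1 (\<xi> - \<xi>1))))"

end

theory Submission
  imports Defs
begin

text \<open>
  Both operators live at high frequency: \<open>B\<^sup>u[f,g](\<xi>)\<close> vanishes unless \<open>\<bar>\<xi>\<bar> > 1/\<delta>\<close>
  and \<open>B\<^sup>v[f,g](\<xi>)\<close> unless \<open>\<bar>\<xi>\<bar> > 1/(100 \<delta>)\<close>. For \<open>\<delta> \<le> 10\<^sup>-\<^sup>7\<close> the phase is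
  then non-resonant on the domain of integration, \<open>\<bar>\<Phi>\<bar> \<ge> \<bar>\<xi>\<bar>\<^sup>3 / 2\<close>. Dividing by it and
  applying Cauchy-Schwarz in \<open>\<xi>\<^sub>1\<close> with the weight \<open>\<langle>\<xi>\<^sub>1\<rangle>\<^sup>2\<^sup>k\<close> (for \<open>B\<^sup>v\<close> also
  \<open>\<langle>\<xi>\<^sub>1 - \<xi>\<rangle>\<^sup>2\<^sup>k\<close>) bounds \<open>\<langle>\<xi>\<rangle>\<^sup>2\<^sup>\<sigma> \<bar>B(\<xi>)\<bar>\<^sup>2\<close> by \<open>\<langle>\<xi>\<rangle>\<^sup>2\<^sup>e\<close> times a
  convolution of the weighted Fourier densities of the two inputs, which by Tonelli
  integrates to the product of their squared Sobolev norms. For any \<open>\<beta> > 1/2\<close> the weight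
  integral costs only a factor \<open>(1 + \<xi>\<^sup>2) powr max (\<beta> - k) 0\<close>, and the constraints on
  \<open>\<epsilon>\<close> are exactly what allows \<open>e < 0\<close> for a suitable \<open>\<beta>\<close>. Since \<open>\<langle>\<xi>\<rangle> > 1/\<delta>\<close>
  (resp. \<open>1/(100 \<delta>)\<close>) on the support, \<open>\<langle>\<xi>\<rangle>\<^sup>2\<^sup>e \<lesssim> \<delta>\<^sup>-\<^sup>2\<^sup>e\<close>, so \<open>\<theta> = -e\<close>.
\<close>

section \<open>Elementary inequalities for the weight \<open>1 + x\<^sup>2\<close>\<close>

lemma one_plus_square_pos [simp]: "0 < 1 + x\<^sup>2" for x :: real
  by (simp add: add_pos_nonneg)

lemma one_plus_square_neq_zero [simp]: "1 + x\<^sup>2 \<noteq> 0" for x :: real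
  using one_plus_square_pos[of x] by linarith

lemma powr_le_of_comparable:
  fixes a b s :: real
  assumes "1 \<le> a" "1 \<le> b" "a \<le> 2 * b" "b \<le> 2 * a"
  shows "a powr (-s) \<le> 2 powr \<bar>s\<bar> * b powr (-s)"
proof -
  have "(a / b) powr (-s) \<le> 2 powr \<bar>s\<bar>"
  proof (cases "s \<le> 0")
    case True
    have "(a / b) powr (-s) \<le> 2 powr (-s)"
      using assms True by (intro powr_mono2) (auto simp: divide_simps)
    then show ?thesis using True by simp
  next
    case False
    have "(a / b) powr (-s) = (b / a) powr s"
      using assms by (simp add: powr_minus powr_divide divide_simps)
    also have "\<dots> \<le> 2 powr s"
      using assms False by (intro powr_mono2) (auto simp: divide_simps)
    finally show ?thesis using False by simp
  qed
  moreover have "a powr (-s) = (a / b) powr (-s) * b powr (-s)"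
    using assms by (simp add: powr_divide)
  ultimately show ?thesis by (simp add: mult_right_mono)
qed

lemma weight_powr_le_of_half:
  fixes c \<xi> k :: real
  assumes "0 \<le> k" "\<bar>\<xi>\<bar> / 2 \<le> \<bar>c\<bar>"
  shows "(1 + c\<^sup>2) powr (-k) \<le> 4 powr k * (1 + \<xi>\<^sup>2) powr (-k)"
proof -
  have "(\<bar>\<xi>\<bar> / 2)\<^sup>2 \<le> \<bar>c\<bar>\<^sup>2" using assms by (intro power_mono) auto
  then have "(1 + \<xi>\<^sup>2) / 4 \<le> 1 + c\<^sup>2" by (simp add: power_divide)
  then have "(1 + c\<^sup>2) powr (-k) \<le> ((1 + \<xi>\<^sup>2) / 4) powr (-k)"
    using assms by (intro powr_mono2') auto
  also have "\<dots> = 4 powr k * (1 + \<xi>\<^sup>2) powr (-k)"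
    by (simp add: powr_divide powr_minus divide_simps)
  finally show ?thesis .
qed

lemma weight_powr_product_le:
  fixes a b k :: real
  assumes "0 \<le> k"
  shows "(1 + a\<^sup>2) powr (-k) * (1 + b\<^sup>2) powr (-k)
     \<le> 4 powr k * (1 + (a - b)\<^sup>2) powr (-k) * ((1 + a\<^sup>2) powr (-k) + (1 + b\<^sup>2) powr (-k))"
proof (cases "\<bar>a - b\<bar> / 2 \<le> \<bar>a\<bar>")
  case True
  have "(1 + a\<^sup>2) powr (-k) * (1 + b\<^sup>2) powr (-k)
      \<le> 4 powr k * (1 + (a - b)\<^sup>2) powr (-k) * (1 + b\<^sup>2) powr (-k)"
    using weight_powr_le_of_half[OF assms True] by (intro mult_right_mono) auto
  also have "\<dots> \<le> 4 powr k * (1 + (a - b)\<^sup>2) powr (-k) * ((1 + a\<^sup>2) powr (-k) + (1 + b\<^sup>2) powr (-k))"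
    by (intro mult_left_mono) auto
  finally show ?thesis .
next
  case False
  then have "\<bar>a - b\<bar> / 2 \<le> \<bar>b\<bar>" by (simp add: abs_if split: if_splits)
  have "(1 + a\<^sup>2) powr (-k) * (1 + b\<^sup>2) powr (-k)
      \<le> 4 powr k * (1 + (a - b)\<^sup>2) powr (-k) * (1 + a\<^sup>2) powr (-k)"
    using mult_left_mono[OF weight_powr_le_of_half[OF assms \<open>\<bar>a - b\<bar> / 2 \<le> \<bar>b\<bar>\<close>], of "(1 + a\<^sup>2) powr (-k)"]
    by (simp add: ac_simps)
  also have "\<dots> \<le> 4 powr k * (1 + (a - b)\<^sup>2) powr (-k) * ((1 + a\<^sup>2) powr (-k) + (1 + b\<^sup>2) powr (-k))"
    by (intro mult_left_mono) auto
  finally show ?thesis .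
qed

lemma square_powr_le_weight_powr:
  fixes \<xi> p :: real
  assumes "1 \<le> \<bar>\<xi>\<bar>" "0 \<le> p"
  shows "(\<xi>\<^sup>2) powr (-p) \<le> 2 powr p * (1 + \<xi>\<^sup>2) powr (-p)"
proof -
  have "1 \<le> \<xi>\<^sup>2" using abs_le_square_iff[of 1 \<xi>] assms by simp
  then have "(1 + \<xi>\<^sup>2) / 2 \<le> \<xi>\<^sup>2" by simp
  then have "(\<xi>\<^sup>2) powr (-p) \<le> ((1 + \<xi>\<^sup>2) / 2) powr (-p)"
    using assms by (intro powr_mono2') auto
  also have "\<dots> = 2 powr p * (1 + \<xi>\<^sup>2) powr (-p)"
    by (simp add: powr_divide powr_minus divide_simps)
  finally show ?thesis .
qed

lemma inverse_sq_le_weight_powr: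
  fixes \<xi> :: real
  assumes "1 \<le> \<bar>\<xi>\<bar>"
  shows "(1 / (pi * \<bar>\<xi>\<bar>^n))\<^sup>2 \<le> 2^n / pi\<^sup>2 * (1 + \<xi>\<^sup>2) powr (-n)"
proof -
  have "(\<xi>\<^sup>2) powr (-n) = 1 / (\<bar>\<xi>\<bar>^n)\<^sup>2"
    using assms by (simp add: powr_minus_divide powr_realpow power_even_abs mult.commute flip: power_mult)
  then have "(1 / (pi * \<bar>\<xi>\<bar>^n))\<^sup>2 = (\<xi>\<^sup>2) powr (-n) / pi\<^sup>2"
    by (simp add: power_divide power_mult_distrib)
  also have "\<dots> \<le> 2 powr n * (1 + \<xi>\<^sup>2) powr (-n) / pi\<^sup>2"
    using square_powr_le_weight_powr[OF assms, of n] by (intro divide_right_mono) auto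
  finally show ?thesis
    by (simp add: powr_realpow)
qed

lemma weight_powr_shift_le:
  fixes \<xi> \<eta> s :: real
  assumes "100 * \<bar>\<eta>\<bar> < \<bar>\<xi>\<bar>"
  shows "(1 + (\<xi> - \<eta>)\<^sup>2) powr (-s) \<le> 2 powr \<bar>s\<bar> * (1 + \<xi>\<^sup>2) powr (-s)"
proof (rule powr_le_of_comparable)
  have "(99/100 * \<bar>\<xi>\<bar>)\<^sup>2 \<le> \<bar>\<xi> - \<eta>\<bar>\<^sup>2"
    using assms abs_triangle_ineq2[of \<xi> \<eta>] by (intro power_mono) auto
  moreover have "\<bar>\<xi> - \<eta>\<bar>\<^sup>2 \<le> (101/100 * \<bar>\<xi>\<bar>)\<^sup>2"
    using assms abs_triangle_ineq4[of \<xi> \<eta>] by (intro power_mono) auto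
  moreover have "(99/100 * \<bar>\<xi>\<bar>)\<^sup>2 = 9801/10000 * \<xi>\<^sup>2" "(101/100 * \<bar>\<xi>\<bar>)\<^sup>2 = 10201/10000 * \<xi>\<^sup>2"
    by (simp_all add: power2_eq_square)
  ultimately have "9801/10000 * \<xi>\<^sup>2 \<le> (\<xi> - \<eta>)\<^sup>2" "(\<xi> - \<eta>)\<^sup>2 \<le> 10201/10000 * \<xi>\<^sup>2"
    by simp_all
  then show "1 + (\<xi> - \<eta>)\<^sup>2 \<le> 2 * (1 + \<xi>\<^sup>2)" and "1 + \<xi>\<^sup>2 \<le> 2 * (1 + (\<xi> - \<eta>)\<^sup>2)"
    using zero_le_power2[of \<xi>] by auto
qed auto

lemma powr_le_powr_times_bound:
  fixes w W k \<beta> :: real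
  assumes "1 \<le> w" "w \<le> W"
  shows "w powr (-k) \<le> w powr (-\<beta>) * W powr max (\<beta> - k) 0"
proof (cases "\<beta> \<le> k")
  case True
  then have "w powr (-k) \<le> w powr (-\<beta>)"
    using assms by (intro powr_mono) auto
  moreover have "W powr max (\<beta> - k) 0 = 1"
    using True assms by simp
  ultimately show ?thesis by simp
next
  case False
  have "w powr (-k) = w powr (-\<beta>) * w powr (\<beta> - k)"
    by (simp add: powr_add[symmetric])
  also have "\<dots> \<le> w powr (-\<beta>) * W powr (\<beta> - k)"
    using False assms by (intro mult_left_mono powr_mono2) auto
  finally show ?thesis using False by simp
qed

lemma weight_powr_le_of_abs_gt:
  fixes \<xi> r e :: real
  assumes "e \<le> 0" "0 < r" "r < \<bar>\<xi>\<bar>"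
  shows "(1 + \<xi>\<^sup>2) powr e \<le> r powr (2 * e)"
proof -
  have "r\<^sup>2 \<le> \<xi>\<^sup>2"
    using assms(2,3) abs_le_square_iff[of r \<xi>] by simp
  then have "(1 + \<xi>\<^sup>2) powr e \<le> (r\<^sup>2) powr e"
    using assms by (intro powr_mono2') auto
  also have "\<dots> = r powr (2 * e)"
    using assms(2) by (simp add: powr_powr flip: powr_numeral)
  finally show ?thesis .
qed

section \<open>Integral inequalities\<close>

lemma nn_integral_powr_tail:
  assumes "1 < b"
  shows "(\<integral>\<^sup>+x. indicator {1..} x * ennreal (x powr (-b)) \<partial>lborel) = ennreal (1 / (b - 1))"
proof -
  have "((\<lambda>x. x powr (-b)) has_integral -(1 powr (-b + 1)) / (-b + 1)) {1..}"
    by (rule has_integral_powr_to_inf) (use assms in auto)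
  moreover have "-(1 powr (-b + 1)) / (-b + 1) = 1 / (b - 1)"
    using assms by (simp add: divide_simps)
  ultimately have "((\<lambda>x. x powr (-b)) has_integral 1 / (b - 1)) {1..}"
    by simp
  from nn_integral_has_integral_lebesgue[OF _ this]
  have "integral\<^sup>N lborel (\<lambda>x. indicator {1..} x * x powr (-b)) = ennreal (1 / (b - 1))"
    by simp
  then show ?thesis
    by (simp add: ennreal_mult' ennreal_indicator mult.commute)
qed

lemma nn_integral_weight_half_line_le:
  assumes "1/2 < \<beta>"
  shows "(\<integral>\<^sup>+x. indicator {0..} x * ennreal ((1 + x\<^sup>2) powr (-\<beta>)) \<partial>lborel) \<le> ennreal (1 + 1 / (2 * \<beta> - 1))"
proof -
  have "(\<integral>\<^sup>+x. indicator {0..} x * ennreal ((1 + x\<^sup>2) powr (-\<beta>)) \<partial>lborel)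
      \<le> (\<integral>\<^sup>+x. indicator {0..<1} x + indicator {1..} x * ennreal (x powr (-(2 * \<beta>))) \<partial>lborel)"
  proof (intro nn_integral_mono)
    fix x :: real
    show "indicator {0..} x * ennreal ((1 + x\<^sup>2) powr (-\<beta>))
        \<le> indicator {0..<1} x + indicator {1..} x * ennreal (x powr (-(2 * \<beta>)))"
    proof (cases "1 \<le> x")
      case True
      have "(1 + x\<^sup>2) powr (-\<beta>) \<le> (x\<^sup>2) powr (-\<beta>)"
        using True assms by (intro powr_mono2') auto
      also have "\<dots> = x powr (-(2 * \<beta>))"
        using True by (simp add: powr_powr flip: powr_numeral)
      finally show ?thesis using True by (simp add: indicator_def)
    next
      case False
      have "(1 + x\<^sup>2) powr (-\<beta>) \<le> 1"
        using powr_mono2'[of "-\<beta>" 1 "1 + x\<^sup>2"] assms by simp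
      then show ?thesis using False by (auto simp: indicator_def)
    qed
  qed
  also have "\<dots> = 1 + ennreal (1 / (2 * \<beta> - 1))"
    using nn_integral_powr_tail[of "2 * \<beta>"] assms by (subst nn_integral_add) auto
  finally show ?thesis
    using assms by (subst ennreal_plus) auto
qed

lemma nn_integral_weight_le:
  assumes "1/2 < \<beta>"
  shows "(\<integral>\<^sup>+x. ennreal ((1 + x\<^sup>2) powr (-\<beta>)) \<partial>lborel) \<le> ennreal (2 + 2 / (2 * \<beta> - 1))"
proof -
  define h where "h x = ennreal ((1 + x\<^sup>2) powr (-\<beta>))" for x :: real
  have [measurable]: "h \<in> borel_measurable borel"
    unfolding h_def by measurable
  have "(\<integral>\<^sup>+x. h x \<partial>lborel) \<le> (\<integral>\<^sup>+x. indicator {0..} x * h x + indicator {..0} x * h x \<partial>lborel)"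
    by (intro nn_integral_mono) (auto simp: indicator_def)
  also have "\<dots> = (\<integral>\<^sup>+x. indicator {0..} x * h x \<partial>lborel) + (\<integral>\<^sup>+x. indicator {..0} x * h x \<partial>lborel)"
    by (intro nn_integral_add) auto
  also have "(\<integral>\<^sup>+x. indicator {..0} x * h x \<partial>lborel) = (\<integral>\<^sup>+x. indicator {0..} x * h x \<partial>lborel)"
    by (subst nn_integral_real_affine[where c = "-1" and t = 0]) (auto simp: h_def indicator_def)
  also have "\<dots> + \<dots> \<le> ennreal (1 + 1 / (2 * \<beta> - 1)) + ennreal (1 + 1 / (2 * \<beta> - 1))"
    using nn_integral_weight_half_line_le[OF assms] unfolding h_def by (intro add_mono)
  also have "\<dots> = ennreal (2 + 2 / (2 * \<beta> - 1))"
    using assms by (subst ennreal_plus[symmetric]) auto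
  finally show ?thesis
    unfolding h_def .
qed

lemma nn_integral_weight_on_bounded_le:
  fixes c W k \<beta> :: real
  assumes "1/2 < \<beta>" "S \<in> sets borel" "\<And>x. x \<in> S \<Longrightarrow> 1 + (x - c)\<^sup>2 \<le> W"
  shows "(\<integral>\<^sup>+x. indicator S x * ennreal ((1 + (x - c)\<^sup>2) powr (-k)) \<partial>lborel)
    \<le> ennreal ((2 + 2 / (2 * \<beta> - 1)) * W powr max (\<beta> - k) 0)"
proof -
  have "(\<integral>\<^sup>+x. indicator S x * ennreal ((1 + (x - c)\<^sup>2) powr (-k)) \<partial>lborel)
      \<le> (\<integral>\<^sup>+x. ennreal ((1 + (x - c)\<^sup>2) powr (-\<beta>)) * ennreal (W powr max (\<beta> - k) 0) \<partial>lborel)"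
  proof (intro nn_integral_mono)
    fix x
    show "indicator S x * ennreal ((1 + (x - c)\<^sup>2) powr (-k))
        \<le> ennreal ((1 + (x - c)\<^sup>2) powr (-\<beta>)) * ennreal (W powr max (\<beta> - k) 0)"
    proof (cases "x \<in> S")
      case True
      then have "(1 + (x - c)\<^sup>2) powr (-k) \<le> (1 + (x - c)\<^sup>2) powr (-\<beta>) * W powr max (\<beta> - k) 0"
        using assms(3) by (intro powr_le_powr_times_bound) auto
      then show ?thesis using True by (simp add: ennreal_mult'[symmetric] ennreal_leI)
    qed simp
  qed
  also have "\<dots> = (\<integral>\<^sup>+x. ennreal ((1 + x\<^sup>2) powr (-\<beta>)) \<partial>lborel) * ennreal (W powr max (\<beta> - k) 0)"
    using nn_integral_real_affine[where f = "\<lambda>x. ennreal ((1 + (x - c)\<^sup>2) powr (-\<beta>))" and c = 1 and t = c]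
    by (simp add: nn_integral_multc)
  also have "\<dots> \<le> ennreal (2 + 2 / (2 * \<beta> - 1)) * ennreal (W powr max (\<beta> - k) 0)"
    using nn_integral_weight_le[OF assms(1)] by (rule mult_right_mono) simp
  also have "\<dots> = ennreal ((2 + 2 / (2 * \<beta> - 1)) * W powr max (\<beta> - k) 0)"
    by (simp add: ennreal_mult'')
  finally show ?thesis .
qed

lemma norm_set_integral_le_nn_integral:
  fixes h :: "'a \<Rightarrow> 'b::{banach, second_countable_topology}"
  shows "ennreal (norm (LINT x:S|M. h x)) \<le> (\<integral>\<^sup>+x. indicator S x * ennreal (norm (h x)) \<partial>M)"
proof (cases "integrable M (\<lambda>x. indicator S x *\<^sub>R h x)")
  case True
  then have "ennreal (norm (LINT x:S|M. h x)) \<le> (\<integral>\<^sup>+x. norm (indicator S x *\<^sub>R h x) \<partial>M)"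
    unfolding set_lebesgue_integral_def by (rule integral_norm_bound_ennreal)
  also have "\<dots> = (\<integral>\<^sup>+x. indicator S x * ennreal (norm (h x)) \<partial>M)"
    by (intro nn_integral_cong) (auto simp: indicator_def)
  finally show ?thesis .
next
  case False
  then show ?thesis
    unfolding set_lebesgue_integral_def by (simp add: not_integrable_integral_eq)
qed

lemma norm_scaled_set_integral_divide_le:
  fixes p q :: "'a \<Rightarrow> 'b::{real_normed_field, banach, second_countable_topology}"
  assumes [measurable]: "p \<in> borel_measurable M" "S \<in> sets M"
    and "0 < m" "\<And>x. x \<in> S \<Longrightarrow> m \<le> norm (q x)"
  shows "ennreal (norm (c * (LINT x:S|M. p x / q x)))
    \<le> ennreal (norm c / m) * (\<integral>\<^sup>+x. indicator S x * ennreal (norm (p x)) \<partial>M)"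
proof -
  have "ennreal (norm (LINT x:S|M. p x / q x)) \<le> (\<integral>\<^sup>+x. indicator S x * ennreal (norm (p x / q x)) \<partial>M)"
    by (rule norm_set_integral_le_nn_integral)
  also have "\<dots> \<le> (\<integral>\<^sup>+x. ennreal (1 / m) * (indicator S x * ennreal (norm (p x))) \<partial>M)"
  proof (intro nn_integral_mono)
    fix x
    have "ennreal (norm (p x / q x)) \<le> ennreal (1 / m) * ennreal (norm (p x))" if "x \<in> S"
    proof -
      have "norm (p x / q x) \<le> 1 / m * norm (p x)"
        using assms(3) assms(4)[OF that] by (simp add: norm_divide divide_simps mult_left_mono mult.commute[of _ "norm (p x)"])
      then show ?thesis using assms(3) by (simp add: ennreal_mult'[symmetric] ennreal_leI)
    qed
    then show "indicator S x * ennreal (norm (p x / q x)) \<le> ennreal (1 / m) * (indicator S x * ennreal (norm (p x)))"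
      by (cases "x \<in> S") auto
  qed
  also have "\<dots> = ennreal (1 / m) * (\<integral>\<^sup>+x. indicator S x * ennreal (norm (p x)) \<partial>M)"
    by (rule nn_integral_cmult) measurable
  finally have "ennreal (norm c) * ennreal (norm (LINT x:S|M. p x / q x))
      \<le> ennreal (norm c) * (ennreal (1 / m) * (\<integral>\<^sup>+x. indicator S x * ennreal (norm (p x)) \<partial>M))"
    by (rule mult_left_mono) simp
  moreover have "ennreal (norm c / m) = ennreal (norm c) * ennreal (1 / m)"
    using ennreal_mult'[of "norm c" "1 / m"] by simp
  ultimately show ?thesis
    by (simp add: norm_mult ennreal_mult' mult.assoc)
qed

lemma weighted_Cauchy_Schwarz_nn_integral:
  fixes w h :: "'a \<Rightarrow> real"
  assumes [measurable]: "S \<in> sets M" "w \<in> borel_measurable M" "h \<in> borel_measurable M"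
    and "\<And>x. x \<in> S \<Longrightarrow> 0 < w x" "\<And>x. 0 \<le> h x"
  shows "(\<integral>\<^sup>+x. indicator S x * ennreal (h x) \<partial>M)\<^sup>2
    \<le> (\<integral>\<^sup>+x. indicator S x * ennreal (1 / w x) \<partial>M) * (\<integral>\<^sup>+x. indicator S x * ennreal (w x * (h x)\<^sup>2) \<partial>M)"
proof -
  define a where "a x = indicator S x * ennreal (sqrt (1 / w x))" for x
  define b where "b x = indicator S x * ennreal (sqrt (w x) * h x)" for x
  have [measurable]: "a \<in> borel_measurable M" "b \<in> borel_measurable M"
    unfolding a_def b_def by measurable
  have "(\<integral>\<^sup>+x. indicator S x * ennreal (h x) \<partial>M) = (\<integral>\<^sup>+x. a x * b x \<partial>M)"
  proof (intro nn_integral_cong)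
    fix x
    show "indicator S x * ennreal (h x) = a x * b x"
    proof (cases "x \<in> S")
      case True
      then have "sqrt (1 / w x) * (sqrt (w x) * h x) = h x"
        using assms(4)[of x] by (simp add: real_sqrt_divide)
      then show ?thesis
        unfolding a_def b_def using True by (metis ennreal_mult' indicator_simps(1) mult_1 real_sqrt_ge_zero
          less_imp_le assms(4) zero_le_divide_1_iff)
    qed (simp add: a_def b_def)
  qed
  moreover have "(\<integral>\<^sup>+x. a x ^ 2 \<partial>M) = (\<integral>\<^sup>+x. indicator S x * ennreal (1 / w x) \<partial>M)"
    unfolding a_def using assms(4)
    by (intro nn_integral_cong) (auto simp: indicator_def ennreal_power less_imp_le)
  moreover have "(\<integral>\<^sup>+x. b x ^ 2 \<partial>M) = (\<integral>\<^sup>+x. indicator S x * ennreal (w x * (h x)\<^sup>2) \<partial>M)"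
    unfolding b_def using assms(4,5)
    by (intro nn_integral_cong) (auto simp: indicator_def ennreal_power power_mult_distrib less_imp_le)
  ultimately show ?thesis
    using Cauchy_Schwarz_nn_integral[of a M b] by simp
qed

lemma ennreal_sq_le_by_weighted_Cauchy_Schwarz:
  fixes w h :: "'a \<Rightarrow> real"
  assumes "S \<in> sets M" "w \<in> borel_measurable M" "h \<in> borel_measurable M"
    and "\<And>x. x \<in> S \<Longrightarrow> 0 < w x" "\<And>x. 0 \<le> h x"
    and "ennreal y \<le> ennreal p * (\<integral>\<^sup>+x. indicator S x * ennreal (h x) \<partial>M)"
    and "(\<integral>\<^sup>+x. indicator S x * ennreal (1 / w x) \<partial>M) \<le> ennreal a"
    and "(\<integral>\<^sup>+x. indicator S x * ennreal (w x * (h x)\<^sup>2) \<partial>M) \<le> ennreal b * J"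
    and "0 \<le> y" "0 \<le> p" "0 \<le> a" "0 \<le> b"
  shows "ennreal (y\<^sup>2) \<le> ennreal (p\<^sup>2 * a * b) * J"
proof -
  have "ennreal (y\<^sup>2) = (ennreal y)\<^sup>2"
    using assms(9) by (simp add: ennreal_power)
  also have "\<dots> \<le> (ennreal p * (\<integral>\<^sup>+x. indicator S x * ennreal (h x) \<partial>M))\<^sup>2"
    using assms(6) by (intro power_mono) auto
  also have "\<dots> = ennreal (p\<^sup>2) * (\<integral>\<^sup>+x. indicator S x * ennreal (h x) \<partial>M)\<^sup>2"
    using assms(10) by (simp add: power_mult_distrib ennreal_power)
  also have "\<dots> \<le> ennreal (p\<^sup>2) * (ennreal a * (ennreal b * J))"
    using assms(7,8)
    by (intro mult_left_mono order.trans[OF weighted_Cauchy_Schwarz_nn_integral[OF assms(1-5)]] mult_mono) auto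
  also have "\<dots> = ennreal (p\<^sup>2 * a * b) * J"
    using assms(11,12) by (simp add: ennreal_mult mult.assoc)
  finally show ?thesis .
qed

lemma nn_integral_convolution:
  fixes F G :: "real \<Rightarrow> ennreal"
  assumes [measurable]: "F \<in> borel_measurable borel" "G \<in> borel_measurable borel"
  shows "(\<integral>\<^sup>+\<xi>. (\<integral>\<^sup>+\<eta>. F \<eta> * G (\<xi> - \<eta>) \<partial>lborel) \<partial>lborel) = (\<integral>\<^sup>+x. F x \<partial>lborel) * (\<integral>\<^sup>+x. G x \<partial>lborel)"
proof -
  have "(\<integral>\<^sup>+\<xi>. (\<integral>\<^sup>+\<eta>. F \<eta> * G (\<xi> - \<eta>) \<partial>lborel) \<partial>lborel)
      = (\<integral>\<^sup>+\<eta>. (\<integral>\<^sup>+\<xi>. F \<eta> * G (\<xi> - \<eta>) \<partial>lborel) \<partial>lborel)"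
    by (rule lborel_pair.Fubini') measurable
  also have "\<dots> = (\<integral>\<^sup>+\<eta>. F \<eta> * (\<integral>\<^sup>+x. G x \<partial>lborel) \<partial>lborel)"
  proof (intro nn_integral_cong)
    fix \<eta> :: real
    have "(\<integral>\<^sup>+x. G x \<partial>lborel) = (\<integral>\<^sup>+\<xi>. G (\<xi> - \<eta>) \<partial>lborel)"
      using nn_integral_real_affine[of G 1 "-\<eta>"] by simp
    then show "(\<integral>\<^sup>+\<xi>. F \<eta> * G (\<xi> - \<eta>) \<partial>lborel) = F \<eta> * (\<integral>\<^sup>+x. G x \<partial>lborel)"
      by (simp add: nn_integral_cmult)
  qed
  also have "\<dots> = (\<integral>\<^sup>+x. F x \<partial>lborel) * (\<integral>\<^sup>+x. G x \<partial>lborel)"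
    by (simp add: nn_integral_multc)
  finally show ?thesis .
qed

lemma nn_integral_correlation:
  fixes F G :: "real \<Rightarrow> ennreal"
  assumes [measurable]: "F \<in> borel_measurable borel" "G \<in> borel_measurable borel"
  shows "(\<integral>\<^sup>+\<xi>. (\<integral>\<^sup>+\<eta>. F \<eta> * G (\<eta> - \<xi>) \<partial>lborel) \<partial>lborel) = (\<integral>\<^sup>+x. F x \<partial>lborel) * (\<integral>\<^sup>+x. G x \<partial>lborel)"
  using nn_integral_convolution[of F "\<lambda>x. G (-x)"] nn_integral_real_affine[of G "-1" 0] by simp

lemma sob_sq_le_of_pointwise:
  fixes J :: "real \<Rightarrow> ennreal"
  assumes "\<And>\<xi>. ennreal ((1 + \<xi>\<^sup>2) powr \<sigma> * (cmod (F \<xi>))\<^sup>2) \<le> ennreal (K * \<delta> powr (2 * \<theta>)) * J \<xi>"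
    and "J \<in> borel_measurable lborel" "(\<integral>\<^sup>+\<xi>. J \<xi> \<partial>lborel) \<le> ennreal (A\<^sup>2) * ennreal (B\<^sup>2)"
    and "0 \<le> K" "0 < \<delta>"
  shows "sob_sq \<sigma> F \<le> ennreal ((sqrt K * \<delta> powr \<theta> * A * B)\<^sup>2)"
proof -
  have "sob_sq \<sigma> F \<le> (\<integral>\<^sup>+\<xi>. ennreal (K * \<delta> powr (2 * \<theta>)) * J \<xi> \<partial>lborel)"
    unfolding sob_sq_def by (intro nn_integral_mono assms(1))
  also have "\<dots> = ennreal (K * \<delta> powr (2 * \<theta>)) * (\<integral>\<^sup>+\<xi>. J \<xi> \<partial>lborel)"
    by (rule nn_integral_cmult) (use assms(2) in simp)
  also have "\<dots> \<le> ennreal (K * \<delta> powr (2 * \<theta>)) * (ennreal (A\<^sup>2) * ennreal (B\<^sup>2))"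
    by (intro mult_left_mono assms(3)) simp
  also have "\<dots> = ennreal (K * \<delta> powr (2 * \<theta>) * A\<^sup>2 * B\<^sup>2)"
    using assms(4) by (simp add: ennreal_mult[symmetric] mult.assoc)
  also have "K * \<delta> powr (2 * \<theta>) * A\<^sup>2 * B\<^sup>2 = (sqrt K * \<delta> powr \<theta> * A * B)\<^sup>2"
  proof -
    have "(\<delta> powr \<theta>)\<^sup>2 = \<delta> powr (2 * \<theta>)"
      using assms(5) by (simp add: power2_eq_square powr_add[symmetric])
    then show ?thesis using assms(4) by (simp add: power_mult_distrib)
  qed
  finally show ?thesis .
qed

lemma sob_sq_le_of_frequency_localized:
  fixes F :: "real \<Rightarrow> complex" and J :: "real \<Rightarrow> ennreal"
  assumes vanish: "\<And>\<xi>. \<bar>\<xi>\<bar> \<le> r \<Longrightarrow> F \<xi> = 0"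
    and bound: "\<And>\<xi>. r < \<bar>\<xi>\<bar> \<Longrightarrow> ennreal ((cmod (F \<xi>))\<^sup>2) \<le> ennreal (K * (1 + \<xi>\<^sup>2) powr a) * J \<xi>"
    and "J \<in> borel_measurable lborel" "(\<integral>\<^sup>+\<xi>. J \<xi> \<partial>lborel) \<le> ennreal (A\<^sup>2) * ennreal (B\<^sup>2)"
    and "0 \<le> K" "0 < r" "\<sigma> + a \<le> 0"
  shows "sob_sq \<sigma> F \<le> ennreal ((sqrt K * r powr (\<sigma> + a) * A * B)\<^sup>2)"
proof (rule sob_sq_le_of_pointwise[OF _ assms(3-6)])
  fix \<xi>
  show "ennreal ((1 + \<xi>\<^sup>2) powr \<sigma> * (cmod (F \<xi>))\<^sup>2) \<le> ennreal (K * r powr (2 * (\<sigma> + a))) * J \<xi>"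
  proof (cases "\<bar>\<xi>\<bar> \<le> r")
    case False
    have "ennreal ((1 + \<xi>\<^sup>2) powr \<sigma> * (cmod (F \<xi>))\<^sup>2) = ennreal ((1 + \<xi>\<^sup>2) powr \<sigma>) * ennreal ((cmod (F \<xi>))\<^sup>2)"
      by (simp add: ennreal_mult')
    also have "\<dots> \<le> ennreal ((1 + \<xi>\<^sup>2) powr \<sigma>) * (ennreal (K * (1 + \<xi>\<^sup>2) powr a) * J \<xi>)"
      using bound[of \<xi>] False by (intro mult_left_mono) auto
    also have "\<dots> = ennreal (K * (1 + \<xi>\<^sup>2) powr (\<sigma> + a)) * J \<xi>"
      using assms(5) by (simp add: powr_add ennreal_mult' ennreal_mult'' ac_simps)
    also have "\<dots> \<le> ennreal (K * r powr (2 * (\<sigma> + a))) * J \<xi>"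
      using weight_powr_le_of_abs_gt[OF assms(7,6), of \<xi>] False assms(5)
      by (intro mult_right_mono ennreal_leI mult_left_mono) auto
    finally show ?thesis .
  qed (simp add: vanish)
qed

section \<open>Pointwise bounds for the boundary operators\<close>

lemma U_set_borel [measurable]: "U_set \<delta> \<xi> \<in> sets borel"
  unfolding U_set_def by measurable

lemma V_set_borel [measurable]: "V_set \<delta> \<xi> \<in> sets borel"
  unfolding V_set_def by measurable

lemma Phi_u_lower_bound:
  fixes \<xi> \<eta> :: real
  assumes "10^7 < \<bar>\<xi>\<bar>" "100 * \<bar>\<eta>\<bar> < \<bar>\<xi>\<bar>"
  shows "\<bar>\<xi>\<bar>^3 / 2 \<le> \<bar>Phi_u \<xi> \<eta> (\<xi> - \<eta>)\<bar>"
proof -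
  have "970299/1000000 * \<bar>\<xi>\<bar>^3 = (99/100 * \<bar>\<xi>\<bar>)^3"
    by (simp add: power_mult_distrib power3_eq_cube)
  also have "\<dots> \<le> \<bar>\<xi> - \<eta>\<bar>^3"
    using assms(2) abs_triangle_ineq2[of \<xi> \<eta>] by (intro power_mono) auto
  also have "\<dots> = \<bar>(\<xi> - \<eta>)^3\<bar>"
    by (simp add: power_abs)
  finally have cube: "970299/1000000 * \<bar>\<xi>\<bar>^3 \<le> \<bar>(\<xi> - \<eta>)^3\<bar>" .
  have "\<bar>\<eta>\<bar> \<le> \<bar>\<xi>\<bar>"
    using assms(2) by linarith
  then have "\<eta>\<^sup>2 \<le> \<xi>\<^sup>2"
    unfolding abs_le_square_iff .
  then have "\<bar>\<eta>\<^sup>2 - \<xi>\<^sup>2\<bar> \<le> \<xi>\<^sup>2"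
    by simp
  moreover have "10000000 * \<xi>\<^sup>2 \<le> \<bar>\<xi>\<bar>^3"
    using mult_right_mono[OF less_imp_le[OF assms(1)], of "\<xi>\<^sup>2"]
    by (simp add: power3_eq_cube power2_eq_square mult.assoc)
  moreover have "\<bar>(\<xi> - \<eta>)^3\<bar> - \<bar>\<eta>\<^sup>2 - \<xi>\<^sup>2\<bar> \<le> \<bar>Phi_u \<xi> \<eta> (\<xi> - \<eta>)\<bar>"
    using abs_triangle_ineq2[of "(\<xi> - \<eta>)^3" "\<eta>\<^sup>2 - \<xi>\<^sup>2"] unfolding Phi_u_def by argo
  ultimately show ?thesis
    using cube by linarith
qed

lemma Phi_v_lower_bound:
  fixes \<xi> \<eta> :: real
  assumes "10^5 < \<bar>\<xi>\<bar>" "\<bar>\<eta>\<bar> < 100 * \<bar>\<xi>\<bar>"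
  shows "\<bar>\<xi>\<bar>^3 / 2 \<le> \<bar>Phi_v \<xi> \<eta> (\<xi> - \<eta>)\<bar>"
proof -
  have "\<bar>\<eta>\<bar>\<^sup>2 \<le> (100 * \<bar>\<xi>\<bar>)\<^sup>2"
    using assms(2) by (intro power_mono) auto
  then have "\<eta>\<^sup>2 \<le> 10000 * \<xi>\<^sup>2"
    by (simp add: power_mult_distrib)
  moreover have "\<bar>\<xi> - \<eta>\<bar>\<^sup>2 \<le> (101 * \<bar>\<xi>\<bar>)\<^sup>2"
    using assms(2) abs_triangle_ineq4[of \<xi> \<eta>] by (intro power_mono) auto
  then have "(\<xi> - \<eta>)\<^sup>2 \<le> 10201 * \<xi>\<^sup>2"
    by (simp add: power_mult_distrib)
  moreover have "100000 * \<xi>\<^sup>2 \<le> \<bar>\<xi>\<bar>^3"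
    using mult_right_mono[OF less_imp_le[OF assms(1)], of "\<xi>\<^sup>2"]
    by (simp add: power3_eq_cube power2_eq_square mult.assoc)
  moreover have "\<bar>\<xi>\<bar>^3 - \<bar>(\<xi> - \<eta>)\<^sup>2 - \<eta>\<^sup>2\<bar> \<le> \<bar>Phi_v \<xi> \<eta> (\<xi> - \<eta>)\<bar>"
    using abs_triangle_ineq2[of "\<xi>^3" "(\<xi> - \<eta>)\<^sup>2 - \<eta>\<^sup>2"] unfolding Phi_v_def power_abs by argo
  moreover have "\<bar>(\<xi> - \<eta>)\<^sup>2 - \<eta>\<^sup>2\<bar> \<le> (\<xi> - \<eta>)\<^sup>2 + \<eta>\<^sup>2"
    by (simp add: abs_le_iff)
  ultimately show ?thesis
    by linarith
qed

lemma Bu_hat_eq_0: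
  assumes "\<bar>\<xi>\<bar> \<le> 1 / \<delta>"
  shows "Bu_hat \<delta> f g \<xi> = 0"
proof -
  have "U_set \<delta> \<xi> = {}"
    using assms unfolding U_set_def by auto
  then show ?thesis
    unfolding Bu_hat_def set_lebesgue_integral_def by simp
qed

lemma Bv_hat_eq_0:
  assumes "0 < \<delta>" "\<bar>\<xi>\<bar> \<le> 1 / (100 * \<delta>)"
  shows "Bv_hat \<delta> f g \<xi> = 0"
proof -
  have "100 * \<bar>\<xi>\<bar> \<le> 1 / \<delta>"
    using assms by (simp add: field_simps)
  then have "V_set \<delta> \<xi> = {}"
    unfolding V_set_def by auto
  then show ?thesis
    unfolding Bv_hat_def set_lebesgue_integral_def by simp
qed

lemma Bu_hat_norm_le:
  fixes f g :: "real \<Rightarrow> complex"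
  assumes [measurable]: "f \<in> borel_measurable borel" "g \<in> borel_measurable borel"
    and "10^7 < \<bar>\<xi>\<bar>"
  shows "ennreal (cmod (Bu_hat \<delta> f g \<xi>))
    \<le> ennreal (1 / (pi * \<bar>\<xi>\<bar>^3)) * (\<integral>\<^sup>+\<eta>. indicator (U_set \<delta> \<xi>) \<eta> * ennreal (cmod (f \<eta>) * cmod (g (\<xi> - \<eta>))) \<partial>lborel)"
proof -
  have "cmod (1 / (2 * complex_of_real pi)) / (\<bar>\<xi>\<bar>^3 / 2) = 1 / (pi * \<bar>\<xi>\<bar>^3)"
    by (simp add: norm_divide norm_mult)
  then show ?thesis
    unfolding Bu_hat_def
    using norm_scaled_set_integral_divide_le[of "\<lambda>\<eta>. f \<eta> * g (\<xi> - \<eta>)" lborel "U_set \<delta> \<xi>" "\<bar>\<xi>\<bar>^3 / 2"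
        "\<lambda>\<eta>. \<i> * complex_of_real (Phi_u \<xi> \<eta> (\<xi> - \<eta>))" "1 / (2 * complex_of_real pi)"]
      assms(3) Phi_u_lower_bound[OF assms(3)]
    by (auto simp: U_set_def norm_mult)
qed

lemma Bv_hat_norm_le:
  fixes f g :: "real \<Rightarrow> complex"
  assumes [measurable]: "f \<in> borel_measurable borel" "g \<in> borel_measurable borel"
    and "10^5 < \<bar>\<xi>\<bar>"
  shows "ennreal (cmod (Bv_hat \<delta> f g \<xi>))
    \<le> ennreal (1 / (pi * \<bar>\<xi>\<bar>^2)) * (\<integral>\<^sup>+\<eta>. indicator (V_set \<delta> \<xi>) \<eta> * ennreal (cmod (f \<eta>) * cmod (g (\<eta> - \<xi>))) \<partial>lborel)"
proof -
  have [measurable]: "(\<lambda>\<eta>. cnj (g (\<eta> - \<xi>))) \<in> borel_measurable borel"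
    by (rule measurable_compose[of "\<lambda>\<eta>. g (\<eta> - \<xi>)" _ borel])
       (auto intro: borel_measurable_continuous_onI continuous_intros)
  have "cmod (\<i> * complex_of_real \<xi> / (2 * complex_of_real pi)) / (\<bar>\<xi>\<bar>^3 / 2) = 1 / (pi * \<bar>\<xi>\<bar>^2)"
    using assms(3) by (simp add: norm_divide norm_mult power2_eq_square power3_eq_cube field_simps)
  then show ?thesis
    unfolding Bv_hat_def
    using norm_scaled_set_integral_divide_le[of "\<lambda>\<eta>. f \<eta> * cnj (g (\<eta> - \<xi>))" lborel "V_set \<delta> \<xi>" "\<bar>\<xi>\<bar>^3 / 2"
        "\<lambda>\<eta>. \<i> * complex_of_real (Phi_v \<xi> \<eta> (\<xi> - \<eta>))" "\<i> * complex_of_real \<xi> / (2 * complex_of_real pi)"]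
      assms(3) Phi_v_lower_bound[OF assms(3)]
    by (auto simp: V_set_def norm_mult)
qed

lemma Bu_weight_integral_le:
  assumes "1/2 < \<beta>"
  shows "(\<integral>\<^sup>+\<eta>. indicator (U_set \<delta> \<xi>) \<eta> * ennreal (1 / (1 + \<eta>\<^sup>2) powr k) \<partial>lborel)
    \<le> ennreal ((2 + 2 / (2 * \<beta> - 1)) * (1 + \<xi>\<^sup>2) powr max (\<beta> - k) 0)"
proof -
  have "1 + (\<eta> - 0)\<^sup>2 \<le> 1 + \<xi>\<^sup>2" if "\<eta> \<in> U_set \<delta> \<xi>" for \<eta>
  proof -
    have "\<bar>\<eta>\<bar> \<le> \<bar>\<xi>\<bar>"
      using that unfolding U_set_def by auto
    then show ?thesis
      unfolding abs_le_square_iff by simp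
  qed
  from nn_integral_weight_on_bounded_le[OF assms U_set_borel this] show ?thesis
    by (simp add: powr_minus_divide)
qed

lemma Bu_tail_integral_le:
  fixes f g :: "real \<Rightarrow> complex"
  assumes [measurable]: "f \<in> borel_measurable borel" "g \<in> borel_measurable borel"
  shows "(\<integral>\<^sup>+\<eta>. indicator (U_set \<delta> \<xi>) \<eta> * ennreal ((1 + \<eta>\<^sup>2) powr k * (cmod (f \<eta>) * cmod (g (\<xi> - \<eta>)))\<^sup>2) \<partial>lborel)
    \<le> ennreal (2 powr \<bar>s\<bar> * (1 + \<xi>\<^sup>2) powr (-s))
      * (\<integral>\<^sup>+\<eta>. ennreal ((1 + \<eta>\<^sup>2) powr k * (cmod (f \<eta>))\<^sup>2)
            * ennreal ((1 + (\<xi> - \<eta>)\<^sup>2) powr s * (cmod (g (\<xi> - \<eta>)))\<^sup>2) \<partial>lborel)"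
proof -
  define c where "c = 2 powr \<bar>s\<bar> * (1 + \<xi>\<^sup>2) powr (-s)"
  have "indicator (U_set \<delta> \<xi>) \<eta> * ennreal ((1 + \<eta>\<^sup>2) powr k * (cmod (f \<eta>) * cmod (g (\<xi> - \<eta>)))\<^sup>2)
      \<le> ennreal c * (ennreal ((1 + \<eta>\<^sup>2) powr k * (cmod (f \<eta>))\<^sup>2)
          * ennreal ((1 + (\<xi> - \<eta>)\<^sup>2) powr s * (cmod (g (\<xi> - \<eta>)))\<^sup>2))" for \<eta>
  proof (cases "\<eta> \<in> U_set \<delta> \<xi>")
    case True
    define v where "v = 1 + (\<xi> - \<eta>)\<^sup>2"
    have "(cmod (g (\<xi> - \<eta>)))\<^sup>2 = v powr (-s) * (v powr s * (cmod (g (\<xi> - \<eta>)))\<^sup>2)"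
      unfolding v_def by (simp add: powr_add[symmetric])
    also have "\<dots> \<le> c * (v powr s * (cmod (g (\<xi> - \<eta>)))\<^sup>2)"
      using True weight_powr_shift_le[of \<eta> \<xi> s] unfolding v_def c_def U_set_def
      by (intro mult_right_mono) auto
    finally have "(1 + \<eta>\<^sup>2) powr k * (cmod (f \<eta>))\<^sup>2 * (cmod (g (\<xi> - \<eta>)))\<^sup>2
        \<le> (1 + \<eta>\<^sup>2) powr k * (cmod (f \<eta>))\<^sup>2 * (c * (v powr s * (cmod (g (\<xi> - \<eta>)))\<^sup>2))"
      by (rule mult_left_mono) simp
    then have "(1 + \<eta>\<^sup>2) powr k * (cmod (f \<eta>) * cmod (g (\<xi> - \<eta>)))\<^sup>2
        \<le> c * ((1 + \<eta>\<^sup>2) powr k * (cmod (f \<eta>))\<^sup>2 * (v powr s * (cmod (g (\<xi> - \<eta>)))\<^sup>2))"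
      by (simp add: power_mult_distrib ac_simps)
    then show ?thesis
      using True unfolding v_def c_def by (simp add: ennreal_mult[symmetric] ennreal_leI)
  qed simp
  then have "(\<integral>\<^sup>+\<eta>. indicator (U_set \<delta> \<xi>) \<eta> * ennreal ((1 + \<eta>\<^sup>2) powr k * (cmod (f \<eta>) * cmod (g (\<xi> - \<eta>)))\<^sup>2) \<partial>lborel)
      \<le> (\<integral>\<^sup>+\<eta>. ennreal c * (ennreal ((1 + \<eta>\<^sup>2) powr k * (cmod (f \<eta>))\<^sup>2)
          * ennreal ((1 + (\<xi> - \<eta>)\<^sup>2) powr s * (cmod (g (\<xi> - \<eta>)))\<^sup>2)) \<partial>lborel)"
    by (intro nn_integral_mono)
  also have "\<dots> = ennreal c * (\<integral>\<^sup>+\<eta>. ennreal ((1 + \<eta>\<^sup>2) powr k * (cmod (f \<eta>))\<^sup>2)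
      * ennreal ((1 + (\<xi> - \<eta>)\<^sup>2) powr s * (cmod (g (\<xi> - \<eta>)))\<^sup>2) \<partial>lborel)"
    by (rule nn_integral_cmult) measurable
  finally show ?thesis
    unfolding c_def .
qed

lemma Bu_hat_sq_le:
  fixes f g :: "real \<Rightarrow> complex"
  assumes [measurable]: "f \<in> borel_measurable borel" "g \<in> borel_measurable borel"
    and "1/2 < \<beta>" "10^7 < \<bar>\<xi>\<bar>"
  shows "ennreal ((cmod (Bu_hat \<delta> f g \<xi>))\<^sup>2)
    \<le> ennreal (8 / pi\<^sup>2 * (2 + 2 / (2 * \<beta> - 1)) * 2 powr \<bar>s\<bar> * (1 + \<xi>\<^sup>2) powr (max (\<beta> - k) 0 - s - 3))
      * (\<integral>\<^sup>+\<eta>. ennreal ((1 + \<eta>\<^sup>2) powr k * (cmod (f \<eta>))\<^sup>2)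
            * ennreal ((1 + (\<xi> - \<eta>)\<^sup>2) powr s * (cmod (g (\<xi> - \<eta>)))\<^sup>2) \<partial>lborel)"
    (is "_ \<le> _ * ?J")
proof -
  define W where "W = 1 + \<xi>\<^sup>2"
  define m where "m = max (\<beta> - k) 0"
  define C\<^sub>\<beta> where "C\<^sub>\<beta> = 2 + 2 / (2 * \<beta> - 1)"
  have "0 \<le> C\<^sub>\<beta>"
    unfolding C\<^sub>\<beta>_def using assms(3) by simp
  have "ennreal ((cmod (Bu_hat \<delta> f g \<xi>))\<^sup>2)
      \<le> ennreal ((1 / (pi * \<bar>\<xi>\<bar>^3))\<^sup>2 * (C\<^sub>\<beta> * W powr m) * (2 powr \<bar>s\<bar> * W powr (-s))) * ?J"
    by (rule ennreal_sq_le_by_weighted_Cauchy_Schwarz[OF _ _ _ _ _ Bu_hat_norm_le[OF assms(1,2,4), where \<delta> = \<delta>]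
          Bu_weight_integral_le[OF assms(3), where \<delta> = \<delta> and \<xi> = \<xi> and k = k, folded W_def m_def C\<^sub>\<beta>_def]
          Bu_tail_integral_le[OF assms(1,2), where \<delta> = \<delta> and \<xi> = \<xi> and k = k and s = s, folded W_def]])
       (measurable, measurable, measurable, use \<open>0 \<le> C\<^sub>\<beta>\<close> in auto)
  also have "\<dots> \<le> ennreal (2^3 / pi\<^sup>2 * W powr (-3) * (C\<^sub>\<beta> * W powr m) * (2 powr \<bar>s\<bar> * W powr (-s))) * ?J"
  proof -
    have "(1 / (pi * \<bar>\<xi>\<bar>^3))\<^sup>2 \<le> 2^3 / pi\<^sup>2 * W powr (-3)"
      using inverse_sq_le_weight_powr[of \<xi> 3] assms(4) unfolding W_def by simp
    then show ?thesis
      using \<open>0 \<le> C\<^sub>\<beta>\<close> by (intro mult_right_mono ennreal_leI) auto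
  qed
  also have "2^3 / pi\<^sup>2 * W powr (-3) * (C\<^sub>\<beta> * W powr m) * (2 powr \<bar>s\<bar> * W powr (-s))
      = 8 / pi\<^sup>2 * C\<^sub>\<beta> * 2 powr \<bar>s\<bar> * (W powr (-3) * W powr m * W powr (-s))"
    by (simp add: ac_simps)
  also have "W powr (-3) * W powr m * W powr (-s) = W powr (m - s - 3)"
    by (simp add: powr_add[symmetric]) (simp add: algebra_simps)
  finally show ?thesis
    unfolding W_def m_def C\<^sub>\<beta>_def .
qed

lemma V_set_weight_integral_le:
  assumes "1/2 < \<beta>" "\<bar>c\<bar> \<le> \<bar>\<xi>\<bar>"
  shows "(\<integral>\<^sup>+\<eta>. indicator (V_set \<delta> \<xi>) \<eta> * ennreal ((1 + (\<eta> - c)\<^sup>2) powr (-k)) \<partial>lborel)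
    \<le> ennreal ((2 + 2 / (2 * \<beta> - 1)) * (10201 * (1 + \<xi>\<^sup>2)) powr max (\<beta> - k) 0)"
proof (rule nn_integral_weight_on_bounded_le[OF assms(1) V_set_borel])
  fix \<eta>
  assume "\<eta> \<in> V_set \<delta> \<xi>"
  then have "\<bar>\<eta> - c\<bar> \<le> 101 * \<bar>\<xi>\<bar>"
    using assms(2) abs_triangle_ineq4[of \<eta> c] unfolding V_set_def by auto
  then have "(\<eta> - c)\<^sup>2 \<le> (101 * \<xi>)\<^sup>2"
    using abs_le_square_iff[of "\<eta> - c" "101 * \<xi>"] by (simp add: abs_mult)
  then show "1 + (\<eta> - c)\<^sup>2 \<le> 10201 * (1 + \<xi>\<^sup>2)"
    by (simp add: power_mult_distrib)
qed

lemma Bv_weight_integral_le: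
  assumes "0 \<le> k" "1/2 < \<beta>"
  shows "(\<integral>\<^sup>+\<eta>. indicator (V_set \<delta> \<xi>) \<eta> * ennreal (1 / ((1 + \<eta>\<^sup>2) powr k * (1 + (\<eta> - \<xi>)\<^sup>2) powr k)) \<partial>lborel)
    \<le> ennreal (4 powr k * (1 + \<xi>\<^sup>2) powr (-k)
        * (2 * ((2 + 2 / (2 * \<beta> - 1)) * (10201 * (1 + \<xi>\<^sup>2)) powr max (\<beta> - k) 0)))"
proof -
  define V where "V = V_set \<delta> \<xi>"
  define c where "c = 4 powr k * (1 + \<xi>\<^sup>2) powr (-k)"
  define C where "C = (2 + 2 / (2 * \<beta> - 1)) * (10201 * (1 + \<xi>\<^sup>2)) powr max (\<beta> - k) 0"
  have "0 \<le> C"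
    unfolding C_def using assms(2) by simp
  have [measurable]: "V \<in> sets borel"
    unfolding V_def by (rule V_set_borel)
  have "(\<integral>\<^sup>+\<eta>. indicator V \<eta> * ennreal (1 / ((1 + \<eta>\<^sup>2) powr k * (1 + (\<eta> - \<xi>)\<^sup>2) powr k)) \<partial>lborel)
      \<le> (\<integral>\<^sup>+\<eta>. ennreal c * (indicator V \<eta> * ennreal ((1 + (\<eta> - 0)\<^sup>2) powr (-k))
          + indicator V \<eta> * ennreal ((1 + (\<eta> - \<xi>)\<^sup>2) powr (-k))) \<partial>lborel)"
  proof (intro nn_integral_mono)
    fix \<eta>
    have "(1 + \<eta>\<^sup>2) powr (-k) * (1 + (\<eta> - \<xi>)\<^sup>2) powr (-k)
        \<le> c * ((1 + \<eta>\<^sup>2) powr (-k) + (1 + (\<eta> - \<xi>)\<^sup>2) powr (-k))"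
      using weight_powr_product_le[OF assms(1), of \<eta> "\<eta> - \<xi>"] unfolding c_def by simp
    then show "indicator V \<eta> * ennreal (1 / ((1 + \<eta>\<^sup>2) powr k * (1 + (\<eta> - \<xi>)\<^sup>2) powr k))
        \<le> ennreal c * (indicator V \<eta> * ennreal ((1 + (\<eta> - 0)\<^sup>2) powr (-k))
          + indicator V \<eta> * ennreal ((1 + (\<eta> - \<xi>)\<^sup>2) powr (-k)))"
      unfolding c_def
      by (cases "\<eta> \<in> V") (auto simp: powr_minus_divide ennreal_mult'[symmetric] ennreal_plus[symmetric] ennreal_leI
          simp del: ennreal_plus)
  qed
  also have "\<dots> = ennreal c * ((\<integral>\<^sup>+\<eta>. indicator V \<eta> * ennreal ((1 + (\<eta> - 0)\<^sup>2) powr (-k)) \<partial>lborel)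
      + (\<integral>\<^sup>+\<eta>. indicator V \<eta> * ennreal ((1 + (\<eta> - \<xi>)\<^sup>2) powr (-k)) \<partial>lborel))"
    by (subst nn_integral_cmult) (measurable, subst nn_integral_add, auto)
  also have "\<dots> \<le> ennreal c * (ennreal C + ennreal C)"
    using V_set_weight_integral_le[OF assms(2), of 0 \<xi> \<delta> k] V_set_weight_integral_le[OF assms(2), of \<xi> \<xi> \<delta> k]
    unfolding V_def C_def by (intro mult_left_mono add_mono) auto
  also have "ennreal C + ennreal C = ennreal (2 * C)"
    using ennreal_plus[OF \<open>0 \<le> C\<close> \<open>0 \<le> C\<close>] by (simp only: mult_2)
  also have "ennreal c * \<dots> = ennreal (c * (2 * C))"
    using \<open>0 \<le> C\<close> by (simp add: ennreal_mult'')
  finally show ?thesis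
    unfolding V_def c_def C_def .
qed

lemma Bv_hat_sq_le:
  fixes f g :: "real \<Rightarrow> complex"
  assumes [measurable]: "f \<in> borel_measurable borel" "g \<in> borel_measurable borel"
    and "0 \<le> k" "1/2 < \<beta>" "10^5 < \<bar>\<xi>\<bar>"
  shows "ennreal ((cmod (Bv_hat \<delta> f g \<xi>))\<^sup>2)
    \<le> ennreal (8 / pi\<^sup>2 * 4 powr k * (2 + 2 / (2 * \<beta> - 1)) * 10201 powr max (\<beta> - k) 0
        * (1 + \<xi>\<^sup>2) powr (max (\<beta> - k) 0 - k - 2))
      * (\<integral>\<^sup>+\<eta>. ennreal ((1 + \<eta>\<^sup>2) powr k * (cmod (f \<eta>))\<^sup>2)
            * ennreal ((1 + (\<eta> - \<xi>)\<^sup>2) powr k * (cmod (g (\<eta> - \<xi>)))\<^sup>2) \<partial>lborel)"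
    (is "_ \<le> _ * ?J")
proof -
  define W where "W = 1 + \<xi>\<^sup>2"
  define m where "m = max (\<beta> - k) 0"
  define C\<^sub>\<beta> where "C\<^sub>\<beta> = 2 + 2 / (2 * \<beta> - 1)"
  define a where "a = 4 powr k * W powr (-k) * (2 * (C\<^sub>\<beta> * (10201 * W) powr m))"
  have "0 \<le> C\<^sub>\<beta>"
    unfolding C\<^sub>\<beta>_def using assms(4) by simp
  have "0 < W"
    unfolding W_def by simp
  have tail: "(\<integral>\<^sup>+\<eta>. indicator (V_set \<delta> \<xi>) \<eta> * ennreal ((1 + \<eta>\<^sup>2) powr k * (1 + (\<eta> - \<xi>)\<^sup>2) powr k
      * (cmod (f \<eta>) * cmod (g (\<eta> - \<xi>)))\<^sup>2) \<partial>lborel) \<le> ennreal 1 * ?J"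
    by (auto intro!: nn_integral_mono simp: indicator_def ennreal_mult[symmetric] power_mult_distrib ac_simps)
  have "ennreal ((cmod (Bv_hat \<delta> f g \<xi>))\<^sup>2) \<le> ennreal ((1 / (pi * \<bar>\<xi>\<bar>^2))\<^sup>2 * a * 1) * ?J"
    by (rule ennreal_sq_le_by_weighted_Cauchy_Schwarz[OF _ _ _ _ _ Bv_hat_norm_le[OF assms(1,2,5), where \<delta> = \<delta>]
          Bv_weight_integral_le[OF assms(3,4), where \<delta> = \<delta> and \<xi> = \<xi>, folded W_def m_def C\<^sub>\<beta>_def, folded a_def] tail])
       (measurable, measurable, measurable, use \<open>0 \<le> C\<^sub>\<beta>\<close> \<open>0 < W\<close> in \<open>auto simp: a_def\<close>)
  also have "\<dots> \<le> ennreal (2^2 / pi\<^sup>2 * W powr (-2) * a) * ?J"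
  proof -
    have "(1 / (pi * \<bar>\<xi>\<bar>^2))\<^sup>2 \<le> 2^2 / pi\<^sup>2 * W powr (-2)"
      using inverse_sq_le_weight_powr[of \<xi> 2] assms(5) unfolding W_def by simp
    moreover have "0 \<le> a"
      unfolding a_def using \<open>0 \<le> C\<^sub>\<beta>\<close> by simp
    ultimately have "(1 / (pi * \<bar>\<xi>\<bar>^2))\<^sup>2 * a * 1 \<le> 2^2 / pi\<^sup>2 * W powr (-2) * a"
      unfolding mult_1_right by (rule mult_right_mono)
    then show ?thesis
      by (intro mult_right_mono ennreal_leI) simp_all
  qed
  also have "2^2 / pi\<^sup>2 * W powr (-2) * a
      = 8 / pi\<^sup>2 * 4 powr k * C\<^sub>\<beta> * 10201 powr m * (W powr (-2) * W powr (-k) * W powr m)"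
    unfolding a_def using \<open>0 < W\<close> by (simp add: powr_mult ac_simps)
  also have "W powr (-2) * W powr (-k) * W powr m = W powr (m - k - 2)"
    by (simp add: powr_add[symmetric]) (simp add: algebra_simps)
  finally show ?thesis
    unfolding W_def m_def C\<^sub>\<beta>_def .
qed

section \<open>Sobolev estimates\<close>

lemma Bu_hat_sob_sq_le:
  fixes f g :: "real \<Rightarrow> complex"
  assumes [measurable]: "f \<in> borel_measurable borel" "g \<in> borel_measurable borel"
    and "1/2 < \<beta>" "0 < \<delta>" "\<delta> \<le> 1/10^7" "k + \<epsilon> + (max (\<beta> - k) 0 - s - 3) \<le> 0"
    and "sob_sq k f \<le> ennreal (A\<^sup>2)" "sob_sq s g \<le> ennreal (B\<^sup>2)"
  shows "sob_sq (k + \<epsilon>) (Bu_hat \<delta> f g)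
    \<le> ennreal ((sqrt (8 / pi\<^sup>2 * (2 + 2 / (2 * \<beta> - 1)) * 2 powr \<bar>s\<bar>)
        * (1 / \<delta>) powr (k + \<epsilon> + (max (\<beta> - k) 0 - s - 3)) * A * B)\<^sup>2)"
proof -
  define J where "J \<xi> = (\<integral>\<^sup>+\<eta>. ennreal ((1 + \<eta>\<^sup>2) powr k * (cmod (f \<eta>))\<^sup>2)
    * ennreal ((1 + (\<xi> - \<eta>)\<^sup>2) powr s * (cmod (g (\<xi> - \<eta>)))\<^sup>2) \<partial>lborel)" for \<xi>
  show ?thesis
  proof (rule sob_sq_le_of_frequency_localized[where J = J])
    fix \<xi> :: real
    assume "1 / \<delta> < \<bar>\<xi>\<bar>"
    moreover have "10^7 \<le> 1 / \<delta>"
      using assms(4,5) by (simp add: field_simps)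
    ultimately show "ennreal ((cmod (Bu_hat \<delta> f g \<xi>))\<^sup>2)
        \<le> ennreal (8 / pi\<^sup>2 * (2 + 2 / (2 * \<beta> - 1)) * 2 powr \<bar>s\<bar> * (1 + \<xi>\<^sup>2) powr (max (\<beta> - k) 0 - s - 3)) * J \<xi>"
      unfolding J_def by (intro Bu_hat_sq_le assms(1-3)) simp
  next
    show "J \<in> borel_measurable lborel"
      unfolding J_def by measurable
  next
    have "(\<integral>\<^sup>+\<xi>. J \<xi> \<partial>lborel) = sob_sq k f * sob_sq s g"
      unfolding J_def sob_sq_def by (rule nn_integral_convolution) measurable
    also have "\<dots> \<le> ennreal (A\<^sup>2) * ennreal (B\<^sup>2)"
      using assms(7,8) by (rule mult_mono) simp_all
    finally show "(\<integral>\<^sup>+\<xi>. J \<xi> \<partial>lborel) \<le> ennreal (A\<^sup>2) * ennreal (B\<^sup>2)" .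
  qed (use assms(3,4,6) in \<open>auto simp: Bu_hat_eq_0\<close>)
qed

lemma Bv_hat_sob_sq_le:
  fixes f g :: "real \<Rightarrow> complex"
  assumes [measurable]: "f \<in> borel_measurable borel" "g \<in> borel_measurable borel"
    and "0 \<le> k" "1/2 < \<beta>" "0 < \<delta>" "\<delta> \<le> 1/10^7" "s + \<epsilon> + (max (\<beta> - k) 0 - k - 2) \<le> 0"
    and "sob_sq k f \<le> ennreal (A\<^sup>2)" "sob_sq k g \<le> ennreal (B\<^sup>2)"
  shows "sob_sq (s + \<epsilon>) (Bv_hat \<delta> f g)
    \<le> ennreal ((sqrt (8 / pi\<^sup>2 * 4 powr k * (2 + 2 / (2 * \<beta> - 1)) * 10201 powr max (\<beta> - k) 0)
        * (1 / (100 * \<delta>)) powr (s + \<epsilon> + (max (\<beta> - k) 0 - k - 2)) * A * B)\<^sup>2)"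
proof -
  define J where "J \<xi> = (\<integral>\<^sup>+\<eta>. ennreal ((1 + \<eta>\<^sup>2) powr k * (cmod (f \<eta>))\<^sup>2)
    * ennreal ((1 + (\<eta> - \<xi>)\<^sup>2) powr k * (cmod (g (\<eta> - \<xi>)))\<^sup>2) \<partial>lborel)" for \<xi>
  show ?thesis
  proof (rule sob_sq_le_of_frequency_localized[where J = J])
    fix \<xi> :: real
    assume "1 / (100 * \<delta>) < \<bar>\<xi>\<bar>"
    moreover have "10^5 \<le> 1 / (100 * \<delta>)"
      using assms(5,6) by (simp add: field_simps)
    ultimately show "ennreal ((cmod (Bv_hat \<delta> f g \<xi>))\<^sup>2)
        \<le> ennreal (8 / pi\<^sup>2 * 4 powr k * (2 + 2 / (2 * \<beta> - 1)) * 10201 powr max (\<beta> - k) 0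
            * (1 + \<xi>\<^sup>2) powr (max (\<beta> - k) 0 - k - 2)) * J \<xi>"
      unfolding J_def by (intro Bv_hat_sq_le assms(1-4)) simp
  next
    show "J \<in> borel_measurable lborel"
      unfolding J_def by measurable
  next
    have "(\<integral>\<^sup>+\<xi>. J \<xi> \<partial>lborel) = sob_sq k f * sob_sq k g"
      unfolding J_def sob_sq_def by (rule nn_integral_correlation) measurable
    also have "\<dots> \<le> ennreal (A\<^sup>2) * ennreal (B\<^sup>2)"
      using assms(8,9) by (rule mult_mono) simp_all
    finally show "(\<integral>\<^sup>+\<xi>. J \<xi> \<partial>lborel) \<le> ennreal (A\<^sup>2) * ennreal (B\<^sup>2)" .
  qed (use assms(4,5,7) in \<open>auto simp: Bv_hat_eq_0\<close>)
qed

lemma Bu_hat_estimate: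
  fixes k s \<epsilon> :: real
  assumes "\<epsilon> < 3 - k + s" "\<epsilon> < s + 5/2"
  obtains \<theta> C where "0 < \<theta>"
    and "\<And>\<delta> f g A B. \<delta> \<in> {0<..1/10^7} \<Longrightarrow> f \<in> borel_measurable lborel \<Longrightarrow> g \<in> borel_measurable lborel \<Longrightarrow>
      sob_sq k f \<le> ennreal (A\<^sup>2) \<Longrightarrow> sob_sq s g \<le> ennreal (B\<^sup>2) \<Longrightarrow>
      sob_sq (k + \<epsilon>) (Bu_hat \<delta> f g) \<le> ennreal ((C * \<delta> powr \<theta> * A * B)\<^sup>2)"
proof -
  define \<beta> where "\<beta> = (1/2 + (3 + s - \<epsilon>)) / 2"
  have \<beta>: "1/2 < \<beta>" "\<beta> < 3 + s - \<epsilon>"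
    using assms unfolding \<beta>_def by auto
  define e where "e = k + \<epsilon> + (max (\<beta> - k) 0 - s - 3)"
  have "e < 0"
    using assms \<beta> unfolding e_def by (auto simp: max_def)
  show ?thesis
  proof (rule that[of "-e" "sqrt (8 / pi\<^sup>2 * (2 + 2 / (2 * \<beta> - 1)) * 2 powr \<bar>s\<bar>)"])
    fix \<delta> A B :: real and f g :: "real \<Rightarrow> complex"
    assume "\<delta> \<in> {0<..1/10^7}" "f \<in> borel_measurable lborel" "g \<in> borel_measurable lborel"
      "sob_sq k f \<le> ennreal (A\<^sup>2)" "sob_sq s g \<le> ennreal (B\<^sup>2)"
    with Bu_hat_sob_sq_le[of f g \<beta> \<delta> k \<epsilon> s A B, folded e_def] \<beta>(1) \<open>e < 0\<close>
    show "sob_sq (k + \<epsilon>) (Bu_hat \<delta> f g)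
        \<le> ennreal ((sqrt (8 / pi\<^sup>2 * (2 + 2 / (2 * \<beta> - 1)) * 2 powr \<bar>s\<bar>) * \<delta> powr (-e) * A * B)\<^sup>2)"
      by (simp add: powr_divide powr_minus_divide)
  qed (use \<open>e < 0\<close> in simp)
qed

lemma Bv_hat_estimate:
  fixes k s \<epsilon> :: real
  assumes "0 \<le> k" "\<epsilon> < 2 - s + k" "\<epsilon> < 4 * k - s"
  obtains \<theta> C where "0 < \<theta>"
    and "\<And>\<delta> f g A B. \<delta> \<in> {0<..1/10^7} \<Longrightarrow> f \<in> borel_measurable lborel \<Longrightarrow> g \<in> borel_measurable lborel \<Longrightarrow>
      sob_sq k f \<le> ennreal (A\<^sup>2) \<Longrightarrow> sob_sq k g \<le> ennreal (B\<^sup>2) \<Longrightarrow>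
      sob_sq (s + \<epsilon>) (Bv_hat \<delta> f g) \<le> ennreal ((C * \<delta> powr \<theta> * A * B)\<^sup>2)"
proof -
  have "1/2 < 2 - s + 2 * k - \<epsilon>"
    using assms by (cases "1/2 \<le> k") auto
  define \<beta> where "\<beta> = (1/2 + min 1 (2 - s + 2 * k - \<epsilon>)) / 2"
  have \<beta>: "1/2 < \<beta>" "\<beta> < 2 - s + 2 * k - \<epsilon>"
    using \<open>1/2 < 2 - s + 2 * k - \<epsilon>\<close> unfolding \<beta>_def by (auto simp: min_def)
  define e where "e = s + \<epsilon> + (max (\<beta> - k) 0 - k - 2)"
  have "e < 0"
    using assms \<beta> unfolding e_def by (auto simp: max_def)
  define K where "K = 8 / pi\<^sup>2 * 4 powr k * (2 + 2 / (2 * \<beta> - 1)) * 10201 powr max (\<beta> - k) 0"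
  show ?thesis
  proof (rule that[of "-e" "sqrt K * 100 powr (-e)"])
    fix \<delta> A B :: real and f g :: "real \<Rightarrow> complex"
    assume "\<delta> \<in> {0<..1/10^7}" "f \<in> borel_measurable lborel" "g \<in> borel_measurable lborel"
      "sob_sq k f \<le> ennreal (A\<^sup>2)" "sob_sq k g \<le> ennreal (B\<^sup>2)"
    with Bv_hat_sob_sq_le[of f g k \<beta> \<delta> s \<epsilon> A B, folded K_def e_def] assms(1) \<beta>(1) \<open>e < 0\<close>
    show "sob_sq (s + \<epsilon>) (Bv_hat \<delta> f g) \<le> ennreal ((sqrt K * 100 powr (-e) * \<delta> powr (-e) * A * B)\<^sup>2)"
      by (simp add: powr_divide powr_minus_divide powr_mult)
  qed (use \<open>e < 0\<close> in simp)
qed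

theorem mainTheorem16:
  shows "\<exists>\<delta>0 > (0::real). \<forall>k s. (k, s) \<in> admissible \<longrightarrow>
    (\<forall>\<epsilon>::real. \<epsilon> < min (3 - k + s) (s + 5/2) \<longrightarrow>
      (\<exists>\<theta> > (0::real). \<exists>C::real. \<forall>\<delta>u \<in> {0<..\<delta>0}.
        \<forall>(u1 :: real \<Rightarrow> real \<Rightarrow> complex) (v2 :: real \<Rightarrow> real \<Rightarrow> complex) (A::real) (B::real).
          (\<forall>t. u1 t \<in> borel_measurable lborel \<and> v2 t \<in> borel_measurable lborel) \<longrightarrow>
          A \<ge> 0 \<longrightarrow> B \<ge> 0 \<longrightarrow>
          (\<forall>t. sob_sq k (u1 t) \<le> ennreal (A\<^sup>2)) \<longrightarrow>
          (\<forall>t. sob_sq s (v2 t) \<le> ennreal (B\<^sup>2)) \<longrightarrow>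
          (\<forall>t. sob_sq (k + \<epsilon>) (Bu_hat \<delta>u (u1 t) (v2 t))
                 \<le> ennreal ((C * \<delta>u powr \<theta> * A * B)\<^sup>2)))) \<and>
    (\<forall>\<epsilon>::real. \<epsilon> < min (2 - s + k) (4 * k - s) \<longrightarrow>
      (\<exists>\<theta> > (0::real). \<exists>C::real. \<forall>\<delta>v \<in> {0<..\<delta>0}.
        \<forall>(u1 :: real \<Rightarrow> real \<Rightarrow> complex) (u2 :: real \<Rightarrow> real \<Rightarrow> complex) (A::real) (B::real).
          (\<forall>t. u1 t \<in> borel_measurable lborel \<and> u2 t \<in> borel_measurable lborel) \<longrightarrow>
          A \<ge> 0 \<longrightarrow> B \<ge> 0 \<longrightarrow>
          (\<forall>t. sob_sq k (u1 t) \<le> ennreal (A\<^sup>2)) \<longrightarrow>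
          (\<forall>t. sob_sq k (u2 t) \<le> ennreal (B\<^sup>2)) \<longrightarrow>
          (\<forall>t. sob_sq (s + \<epsilon>) (Bv_hat \<delta>v (u1 t) (u2 t))
                 \<le> ennreal ((C * \<delta>v powr \<theta> * A * B)\<^sup>2))))"
  apply (rule exI[of _ "1/10^7"], intro conjI allI impI)
    apply simp
  subgoal for k s \<epsilon>
    by (rule Bu_hat_estimate[of \<epsilon> k s]) (simp, simp, blast)
  subgoal for k s \<epsilon>
    by (rule Bv_hat_estimate[of k \<epsilon> s]) (simp add: admissible_def, simp, simp, blast)
  done

end
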